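(* Let $\eta \geq \varepsilon > 0$ and let the algorithm below be initialised with $\mathcal S_1=\{(\hat A_1,\hat B_1)\}$, $(\hat A_1, \hat B_1) \in \Omega$. Then, in a finite number of steps, the algorithm either declares infeasibility or returns a triplet $(Q, Y, Z)$ such that $V(x) = x^\top Q^{-1} x$ is a control Lyapunov function for the uncertain system $x(t+1)=A(t)x(t)+B(t)u(t)$, $(A(t),B(t))\in\Omega$, with saturated input $u = \mathrm{sat}_{\mathscr U}(Kx)$, where $K = YQ^{-1}$.
   Context: Consider the discrete-time control-affine system $x(t+1)=f(x(t))+g(x(t),\phi(t))u(t)$ with $f:\mathbb{R}^n\to\mathbb{R}^n$, $g:\mathbb{R}^n\times[0,1]^p\to\mathbb{R}^{n\times p}$ of class $C^2$, state domain $\mathscr D=\{x\in\mathbb{R}^n : Lx\le \mathbf 1_\ell\}$ ($L\in\mathbb{R}^{\ell\times n}$, rows $l_i$), input set $\mathscr U=\{u\in\mathbb{R}^p: |u|\le \bar u\}$, and fault set $\Phi=\{\phi\in[0,1]^p : \text{at least } p-1 \text{ entries equal } 1\}$ ($\phi_i$ = efficiency of actuator $i$). $\mathrm{sat}_{\mathscr U}$ is the componentwise saturation $u_i\mapsto \mathrm{sign}(u_i)\min\{\bar u_i,|u_i|\}$. Let $\Omega$ be the set of pairs $(A,B)$ with $A=\frac{df}{dx}|_{x=\bar x}$, $B=\frac{dg}{dx}|_{x=\bar x,\phi=\bar\phi}$ for $\bar x\in\mathscr D$, $\bar\phi\in\Phi$; $\Omega$ is assumed bounded (hence compact and connected), and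 $A$, $B$ are Lipschitz in $x$ (and $\phi$) with constants $\kappa_A,\kappa_B$. Let $E_j$, $j=1,\dots,2^p$, be the diagonal $p\times p$ matrices with $0/1$ entries, $E_j^-=I-E_j$, and fix $\tau\in[0,1]$. For $(A,B)$, $j$ and matrices $(Q,Y,Z)$ define the symmetric block matrix $\Xi(A,B,j)=\begin{bmatrix}\tau Q & \star & \star\\ 0 & (1-\tau)I & \star\\ AQ+BE_jY+BE_j^-Z & 0 & Q\end{bmatrix}$ ($\star$ = transposed blocks). Algorithm: at step $k$, the learner takes the finite sample set $\mathcal S_k\subset\Omega$, computes the $V_k$ vertices $(A_i,B_i)$ of $\mathrm{conv}(\mathcal S_k)$, and solves the SDP: maximise $\mathrm{trace}(Q)$ over $Q,Y,Z$ subject to $\Xi(A_i,B_i,j)\succcurlyeq \varepsilon I$ for all $i=1,\dots,V_k$, $j=1,\dots,2^p$; $\begin{bmatrix}1 & l_iQ\\ Ql_i^\top & Q\end{bmatrix}\succcurlyeq 0$ for all $i=1,\dots,\ell$; $\begin{bmatrix}\bar u_i^2 & z_i\\ z_i^\top & Q\end{bmatrix}\succcurlyeq0$ for all $i=1,\dots,p$ ($z_i$ = $i$-th row of $Z$); $Q\preccurlyeq \eta I$, $Y\in\mathcal Y$, $Z\in\mathcal Z$ with $\mathcal Y,\mathcal Z$ nonempty convex compact. If infeasible, the algorithm exits declaring infeasibility; otherwise it sets $P_k=Q^{-1}$, $K_k=YQ^{-1}$, $H_k=ZQ^{-1}$. The verifier then solves globally (via Lipschitz global optimisation) $\lambda^*=\min_{(A,B)\in\Omega,\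 j}\lambda_{\min}(\Xi_k(A,B,j))$, equivalently minimising over $x\in\mathscr D,\phi\in\Phi$. If $\lambda^*\le0$ the minimiser $(A^*,B^* )$ is added: $\mathcal S_{k+1}=\mathcal S_k\cup\{(A^*,B^* )\}$ and the loop repeats; if $\lambda^*>0$ it returns $V(x)=x^\top P_kx$, $K=K_k$, $H=H_k$. *)

theory Defs
  imports "HOL-Analysis.Analysis"
begin

definition psd :: "real^'m^'m \<Rightarrow> bool" where
  "psd M \<longleftrightarrow> transpose M = M \<and> (\<forall>x. 0 \<le> x \<bullet> (M *v x))"

definition lam_min :: "real^'m^'m \<Rightarrow> real" where
  "lam_min M = Inf {x \<bullet> (M *v x) | x. norm x = 1}"

text \<open>The diagonal 0/1 matrices E_j, indexed by the set J of diagonal positions equal to 1.\<close>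
definition Emat :: "'p set \<Rightarrow> real^'p^'p" where
  "Emat J = (\<chi> i k. if i = k \<and> i \<in> J then 1 else 0)"

text \<open>The block matrix Xi(A,B,j) = [tau Q, *, *; 0, (1-tau) I, *; AQ+BE_jY+BE_j^-Z, 0, Q].\<close>
definition Xi :: "real \<Rightarrow> real^'n^'n \<Rightarrow> real^'p^'n \<Rightarrow> 'p set \<Rightarrow> real^'n^'n \<Rightarrow>
    real^'n^'p \<Rightarrow> real^'n^'p \<Rightarrow> real^('n + 'n + 'n)^('n + 'n + 'n)" where
  "Xi \<tau> A B J Q Y Z =
    (let M = A ** Q + B ** Emat J ** Y + B ** (mat 1 - Emat J) ** Z in
     \<chi> r c. (case r of
        Inl a \<Rightarrow> (case c of Inl b \<Rightarrow> \<tau> * Q$a$b | Inr (Inl b) \<Rightarrow> 0 | Inr (Inr b) \<Rightarrow> M$b$a)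
      | Inr (Inl a) \<Rightarrow> (case c of Inl b \<Rightarrow> 0 | Inr (Inl b) \<Rightarrow> (1 - \<tau>) * (mat 1 :: real^'n^'n)$a$b
                                 | Inr (Inr b) \<Rightarrow> 0)
      | Inr (Inr a) \<Rightarrow> (case c of Inl b \<Rightarrow> M$a$b | Inr (Inl b) \<Rightarrow> 0 | Inr (Inr b) \<Rightarrow> Q$a$b)))"

definition blk2 :: "real \<Rightarrow> real^'n \<Rightarrow> real^'n \<Rightarrow> real^'n^'n \<Rightarrow> real^(unit + 'n)^(unit + 'n)" where
  "blk2 a r c Q =
    (\<chi> i k. (case i of
        Inl _ \<Rightarrow> (case k of Inl _ \<Rightarrow> a | Inr b \<Rightarrow> r$b)
      | Inr i' \<Rightarrow> (case k of Inl _ \<Rightarrow> c$i' | Inr b \<Rightarrow> Q$i'$b)))"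

definition verts :: "'a::real_vector set \<Rightarrow> 'a set" where
  "verts S = {v. v extreme_point_of (convex hull S)}"

definition sdp_feasible :: "real \<Rightarrow> real \<Rightarrow> real \<Rightarrow> real^'n^'l \<Rightarrow> real^'p \<Rightarrow>
    (real^'n^'p) set \<Rightarrow> (real^'n^'p) set \<Rightarrow> ((real^'n^'n) \<times> (real^'p^'n)) set \<Rightarrow>
    real^'n^'n \<Rightarrow> real^'n^'p \<Rightarrow> real^'n^'p \<Rightarrow> bool" where
  "sdp_feasible \<tau> \<epsilon> \<eta> L ubar YY ZZ V Q Y Z \<longleftrightarrow>
     (\<forall>(A, B) \<in> V. \<forall>J. psd (Xi \<tau> A B J Q Y Z - \<epsilon> *\<^sub>R mat 1)) \<and>
     (\<forall>i. psd (blk2 1 ((L$i) v* Q) (Q *v (L$i)) Q)) \<and>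
     (\<forall>i. psd (blk2 ((ubar$i)^2) (Z$i) (Z$i) Q)) \<and>
     psd (\<eta> *\<^sub>R mat 1 - Q) \<and> Y \<in> YY \<and> Z \<in> ZZ"

definition sdp_optimal :: "real \<Rightarrow> real \<Rightarrow> real \<Rightarrow> real^'n^'l \<Rightarrow> real^'p \<Rightarrow>
    (real^'n^'p) set \<Rightarrow> (real^'n^'p) set \<Rightarrow> ((real^'n^'n) \<times> (real^'p^'n)) set \<Rightarrow>
    real^'n^'n \<Rightarrow> real^'n^'p \<Rightarrow> real^'n^'p \<Rightarrow> bool" where
  "sdp_optimal \<tau> \<epsilon> \<eta> L ubar YY ZZ V Q Y Z \<longleftrightarrow>
     sdp_feasible \<tau> \<epsilon> \<eta> L ubar YY ZZ V Q Y Z \<and>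
     (\<forall>Q' Y' Z'. sdp_feasible \<tau> \<epsilon> \<eta> L ubar YY ZZ V Q' Y' Z' \<longrightarrow> trace Q' \<le> trace Q)"

definition is_global_min :: "((real^'n^'n) \<times> (real^'p^'n)) set \<Rightarrow> real \<Rightarrow> real^'n^'n \<Rightarrow>
    real^'n^'p \<Rightarrow> real^'n^'p \<Rightarrow> ((real^'n^'n) \<times> (real^'p^'n)) \<times> 'p set \<Rightarrow> bool" where
  "is_global_min \<Omega> \<tau> Q Y Z w \<longleftrightarrow>
     (case w of ((A, B), J) \<Rightarrow> (A, B) \<in> \<Omega> \<and>
        (\<forall>(A', B') \<in> \<Omega>. \<forall>J'. lam_min (Xi \<tau> A B J Q Y Z) \<le> lam_min (Xi \<tau> A' B' J' Q Y Z)))"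

definition lstar :: "real \<Rightarrow> ((real^'n^'n) \<times> (real^'n^'p) \<times> (real^'n^'p) \<Rightarrow> ((real^'n^'n) \<times> (real^'p^'n)) \<times> 'p set)
    \<Rightarrow> (real^'n^'n) \<times> (real^'n^'p) \<times> (real^'n^'p) \<Rightarrow> real" where
  "lstar \<tau> ver s = (case s of (Q, Y, Z) \<Rightarrow>
     (case ver (Q, Y, Z) of ((A, B), J) \<Rightarrow> lam_min (Xi \<tau> A B J Q Y Z)))"

text \<open>Sample sets S_k of the learner-verifier loop (index 0 corresponds to S_1).\<close>
primrec samples :: "(((real^'n^'n) \<times> (real^'p^'n)) set \<Rightarrow> ((real^'n^'n) \<times> (real^'n^'p) \<times> (real^'n^'p)) option) \<Rightarrow>
    ((real^'n^'n) \<times> (real^'n^'p) \<times> (real^'n^'p) \<Rightarrow> ((real^'n^'n) \<times> (real^'p^'n)) \<times> 'p set) \<Rightarrow>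
    (real^'n^'n) \<times> (real^'p^'n) \<Rightarrow> nat \<Rightarrow> ((real^'n^'n) \<times> (real^'p^'n)) set" where
  "samples lrn ver p1 0 = {p1}"
| "samples lrn ver p1 (Suc k) =
     (case lrn (samples lrn ver p1 k) of
        None \<Rightarrow> samples lrn ver p1 k
      | Some s \<Rightarrow> insert (fst (ver s)) (samples lrn ver p1 k))"

definition satU :: "real^'p \<Rightarrow> real^'p \<Rightarrow> real^'p" where
  "satU ubar u = (\<chi> i. sgn (u$i) * min (ubar$i) \<bar>u$i\<bar>)"

definition is_clf_sat :: "((real^'n^'n) \<times> (real^'p^'n)) set \<Rightarrow> real^'n^'l \<Rightarrow> real^'p \<Rightarrow>
    real^'n^'n \<Rightarrow> real^'n^'p \<Rightarrow> bool" where
  "is_clf_sat \<Omega> L ubar P K \<longleftrightarrow>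
     (\<forall>x. x \<noteq> 0 \<longrightarrow> 0 < x \<bullet> (P *v x)) \<and>
     (\<forall>x. x \<bullet> (P *v x) \<le> 1 \<longrightarrow> (\<forall>i. (L$i) \<bullet> x \<le> 1)) \<and>
     (\<forall>x A B. (A, B) \<in> \<Omega> \<longrightarrow> x \<bullet> (P *v x) \<le> 1 \<longrightarrow> x \<noteq> 0 \<longrightarrow>
        (let x' = A *v x + B *v satU ubar (K *v x) in x' \<bullet> (P *v x') < x \<bullet> (P *v x)))"

end

theory Submission
  imports Defs
begin

(* Each sample added by the verifier is a point of \<Omega> where the learner's current solution
   violates the LMI, whereas that solution satisfies it with margin \<epsilon> on the convex hull of all
   earlier samples: \<Xi> is affine in (A, B), so checking the vertices suffices (Krein-Milman).
   \<Xi> is Lipschitz in (A, B) with a constant that is uniform along the run, because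
   0 \<le> Q \<le> \<eta> I and Y, Z range over compact sets; hence the samples are uniformly separated,
   and compactness of \<Omega> allows only finitely many of them.
   When the verifier certifies \<lambda>* > 0, \<Xi> is positive definite on all of \<Omega>. Schur complements
   turn the block constraints into properties of V(x) = x' Q\<inverse> x: V is positive, its unit
   level set lies in the state domain and on it |H x| \<le> ubar, and V strictly decreases under
   every input E_j K x + E_j\<^sup>- H x. As V of the successor state is convex in the input and
   sat(K x) lies coordinatewise between K x and H x, the decrease carries over to the
   saturated input. *)

section \<open>Block vectors and the quadratic form of \<open>\<Xi>\<close>\<close>

lemma sum_UNIV_sum_type:
  "(\<Sum>r\<in>UNIV. f r) = (\<Sum>a\<in>UNIV. f (Inl a)) + (\<Sum>b\<in>UNIV. f (Inr b))"
  for f :: "'a::finite + 'b::finite \<Rightarrow> 'c::comm_monoid_add"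
  by (subst UNIV_Plus_UNIV [symmetric], subst sum.Plus) (simp_all add: comp_def)

definition stack3 :: "real^'n \<Rightarrow> real^'n \<Rightarrow> real^'n \<Rightarrow> real^('n + 'n + 'n)" where
  "stack3 y u z = (\<chi> r. case r of Inl a \<Rightarrow> y$a | Inr (Inl a) \<Rightarrow> u$a | Inr (Inr a) \<Rightarrow> z$a)"

lemma stack3_cases:
  obtains y u z where "w = stack3 y u z"
proof
  show "w = stack3 (\<chi> a. w$Inl a) (\<chi> a. w$Inr (Inl a)) (\<chi> a. w$Inr (Inr a))"
    by (simp add: stack3_def vec_eq_iff split: sum.split)
qed

lemma stack3_eq_0_iff [simp]: "stack3 y u z = 0 \<longleftrightarrow> y = 0 \<and> u = 0 \<and> z = 0"
  by (auto simp: stack3_def vec_eq_iff split: sum.split)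

lemma inner_stack3: "stack3 y u z \<bullet> stack3 y' u' z' = y \<bullet> y' + u \<bullet> u' + z \<bullet> z'"
  by (simp add: inner_vec_def sum_UNIV_sum_type stack3_def add.assoc)

definition Xi_offdiag :: "real^'n^'n \<Rightarrow> real^'p^'n \<Rightarrow> 'p set \<Rightarrow> real^'n^'n \<Rightarrow>
    real^'n^'p \<Rightarrow> real^'n^'p \<Rightarrow> real^'n^'n" where
  "Xi_offdiag A B J Q Y Z = A ** Q + B ** Emat J ** Y + B ** (mat 1 - Emat J) ** Z"

lemma Xi_quadratic_form:
  fixes Q :: "real^'n^'n"
  shows "stack3 y u z \<bullet> (Xi \<tau> A B J Q Y Z *v stack3 y u z) =
       \<tau> * (y \<bullet> (Q *v y)) + (1 - \<tau>) * (u \<bullet> u) + 2 * (z \<bullet> (Xi_offdiag A B J Q Y Z *v y)) + z \<bullet> (Q *v z)"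
proof -
  define M where "M = Xi_offdiag A B J Q Y Z"
  have identity: "(\<Sum>b\<in>UNIV. (1 - \<tau>) * (mat 1 :: real^'n^'n)$a$b * u$b) = (1 - \<tau>) * u$a" for a
    by (simp add: mat_def if_distrib if_distribR cong: if_cong)
  have transpose_term: "(\<Sum>a\<in>UNIV. y$a * (\<Sum>b\<in>UNIV. M$b$a * z$b)) = (\<Sum>a\<in>UNIV. z$a * (\<Sum>b\<in>UNIV. M$a$b * y$b))"
    by (simp add: sum_distrib_left algebra_simps) (rule sum.swap)
  show ?thesis
    unfolding Xi_def Let_def Xi_offdiag_def[symmetric] M_def[symmetric]
    unfolding inner_vec_def matrix_vector_mult_def sum_UNIV_sum_type
    apply (simp add: stack3_def identity)
    apply (simp only: distrib_left sum.distrib transpose_term)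
    apply (simp add: sum_distrib_left algebra_simps)
    done
qed

definition select_coords :: "'p set \<Rightarrow> real^'p \<Rightarrow> real^'p \<Rightarrow> real^'p" where
  "select_coords J a b = (\<chi> i. if i \<in> J then a$i else b$i)"

lemma Emat_mult_vec: "Emat J *v v = select_coords J v 0"
  by (simp add: Emat_def select_coords_def matrix_vector_mult_def vec_eq_iff if_distrib if_distribR
      cong: if_cong)

lemma Xi_offdiag_mult_vec:
  "Xi_offdiag A B J Q Y Z *v y = A *v (Q *v y) + B *v select_coords J (Y *v y) (Z *v y)"
proof -
  have "Xi_offdiag A B J Q Y Z *v y
      = A *v (Q *v y) + B *v (Emat J *v (Y *v y) + (mat 1 - Emat J) *v (Z *v y))"
    by (simp add: Xi_offdiag_def matrix_vector_mult_add_rdistrib matrix_vector_right_distrib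
        flip: matrix_vector_mul_assoc)
  also have "Emat J *v (Y *v y) + (mat 1 - Emat J) *v (Z *v y) = select_coords J (Y *v y) (Z *v y)"
    by (simp add: matrix_vector_mult_diff_rdistrib Emat_mult_vec select_coords_def vec_eq_iff)
  finally show ?thesis .
qed

lemma norm_select_coords_le: "norm (select_coords J a b) \<le> norm a + norm b"
proof -
  have split: "select_coords J a b = select_coords J a 0 + select_coords J 0 b"
    by (simp add: select_coords_def vec_eq_iff)
  have "norm (select_coords J a b) \<le> norm (select_coords J a 0) + norm (select_coords J 0 b)"
    by (subst split) (rule norm_triangle_ineq)
  also have "\<dots> \<le> norm a + norm b"
    by (intro add_mono norm_le_componentwise_cart) (simp_all add: select_coords_def)
  finally show ?thesis .
qed

lemma Xi_quadratic_form_affine: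
  fixes Q :: "real^'n^'n"
  assumes "s + t = 1"
  shows "w \<bullet> (Xi \<tau> (s *\<^sub>R A + t *\<^sub>R A') (s *\<^sub>R B + t *\<^sub>R B') J Q Y Z *v w)
    = s * (w \<bullet> (Xi \<tau> A B J Q Y Z *v w)) + t * (w \<bullet> (Xi \<tau> A' B' J Q Y Z *v w))"
proof -
  obtain y u z where w: "w = stack3 y u z" by (rule stack3_cases)
  have t: "t = 1 - s" using assms by simp
  show ?thesis
    unfolding w Xi_quadratic_form Xi_offdiag_mult_vec t
    by (simp add: matrix_vector_mult_add_rdistrib algebra_simps flip: scaleR_matrix_vector_assoc)
qed

section \<open>Norm and eigenvalue bounds\<close>

lemma norm_matrix_vector_mult_le:
  fixes A :: "real^'n^'m"
  shows "norm (A *v x) \<le> norm A * norm x"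
proof -
  have "norm (A *v x) \<le> norm (\<chi> i. norm (A$i) * norm x)"
    by (rule norm_le_componentwise_cart) (simp add: matrix_vector_mul_component Cauchy_Schwarz_ineq2)
  also have "\<dots> = norm A * norm x"
    by (simp add: norm_vec_def L2_set_def power_mult_distrib sum_distrib_right[symmetric]
        real_sqrt_mult abs_of_nonneg sum_nonneg)
  finally show ?thesis .
qed

lemma quadratic_form_abs_le:
  fixes M :: "real^'n^'n"
  shows "\<bar>x \<bullet> (M *v x)\<bar> \<le> norm M * (x \<bullet> x)"
proof -
  have "\<bar>x \<bullet> (M *v x)\<bar> \<le> norm x * (norm M * norm x)"
    by (rule order_trans[OF Cauchy_Schwarz_ineq2 mult_left_mono[OF norm_matrix_vector_mult_le]]) simp
  then show ?thesis
    by (simp add: dot_square_norm power2_eq_square algebra_simps)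
qed

lemma lam_min_le_quadratic_form:
  fixes M :: "real^'n^'n"
  shows "lam_min M * (x \<bullet> x) \<le> x \<bullet> (M *v x)"
proof (cases "x = 0")
  case False
  have bdd: "bdd_below {x \<bullet> (M *v x) | x. norm x = 1}"
  proof (rule bdd_belowI)
    fix q assume "q \<in> {x \<bullet> (M *v x) | x. norm x = 1}"
    then obtain e where "norm e = 1" "q = e \<bullet> (M *v e)" by blast
    then show "- norm M \<le> q"
      using quadratic_form_abs_le[of e M] by (simp add: dot_square_norm)
  qed
  define e where "e = (1 / norm x) *\<^sub>R x"
  have "norm e = 1" using False by (simp add: e_def)
  then have "lam_min M \<le> e \<bullet> (M *v e)"
    unfolding lam_min_def by (intro cInf_lower[OF _ bdd]) blast
  also have "e \<bullet> (M *v e) = (x \<bullet> (M *v x)) / (x \<bullet> x)"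
    by (simp add: e_def matrix_vector_mult_scaleR dot_square_norm power2_eq_square)
  finally show ?thesis
    using False by (simp add: pos_le_divide_eq)
qed simp

lemma lam_min_greatest:
  fixes M :: "real^'n^'n"
  assumes "\<And>x. norm x = 1 \<Longrightarrow> c \<le> x \<bullet> (M *v x)"
  shows "c \<le> lam_min M"
proof -
  have unit: "norm (axis undefined (1::real) :: real^'n) = 1" by simp
  show ?thesis
    unfolding lam_min_def by (intro cInf_greatest) (use assms unit in blast)+
qed

lemma scaled_identity_mult_vec [simp]: "(c *\<^sub>R mat 1 :: real^'n^'n) *v v = c *\<^sub>R v"
  by (metis scaleR_matrix_vector_assoc matrix_vector_mul_lid)

lemma psd_diff_scaled_identity_lower:
  fixes M :: "real^'n^'n"
  assumes "psd (M - c *\<^sub>R mat 1)"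
  shows "c * (v \<bullet> v) \<le> v \<bullet> (M *v v)"
proof -
  have "0 \<le> v \<bullet> ((M - c *\<^sub>R mat 1) *v v)" using assms unfolding psd_def by blast
  also have "\<dots> = v \<bullet> (M *v v) - c * (v \<bullet> v)"
    by (simp only: matrix_vector_mult_diff_rdistrib scaled_identity_mult_vec inner_diff_right inner_scaleR_right)
  finally show ?thesis by simp
qed

lemma psd_scaled_identity_diff_upper:
  fixes Q :: "real^'n^'n"
  assumes "psd (c *\<^sub>R mat 1 - Q)"
  shows "transpose Q = Q" and "v \<bullet> (Q *v v) \<le> c * (v \<bullet> v)"
proof -
  have sym: "transpose (c *\<^sub>R mat 1 - Q) = c *\<^sub>R mat 1 - Q" using assms unfolding psd_def by blast
  have "Q$j$i = Q$i$j" for i j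
    using arg_cong[OF sym, of "\<lambda>M. M$i$j"] by (simp add: transpose_def mat_def eq_commute[of j i])
  then show "transpose Q = Q" by (simp add: transpose_def vec_eq_iff)
  have "0 \<le> v \<bullet> ((c *\<^sub>R mat 1 - Q) *v v)" using assms unfolding psd_def by blast
  also have "\<dots> = c * (v \<bullet> v) - v \<bullet> (Q *v v)"
    by (simp only: matrix_vector_mult_diff_rdistrib scaled_identity_mult_vec inner_diff_right inner_scaleR_right)
  finally show "v \<bullet> (Q *v v) \<le> c * (v \<bullet> v)" by simp
qed

lemma symmetric_quadratic_form_swap:
  fixes Q :: "real^'n^'n"
  assumes "transpose Q = Q"
  shows "b \<bullet> (Q *v a) = a \<bullet> (Q *v b)"
  by (metis assms dot_lmul_matrix inner_commute transpose_matrix_vector)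

lemma quadratic_form_Cauchy_Schwarz:
  fixes Q :: "real^'n^'n"
  assumes sym: "transpose Q = Q" and nonneg: "\<And>v. 0 \<le> v \<bullet> (Q *v v)"
  shows "(a \<bullet> (Q *v b))\<^sup>2 \<le> (a \<bullet> (Q *v a)) * (b \<bullet> (Q *v b))"
proof -
  define \<alpha> \<beta> \<gamma> where "\<alpha> = a \<bullet> (Q *v a)" and "\<beta> = a \<bullet> (Q *v b)" and "\<gamma> = b \<bullet> (Q *v b)"
  have line: "0 \<le> \<alpha> + 2 * t * \<beta> + t\<^sup>2 * \<gamma>" for t
  proof -
    have "0 \<le> (a + t *\<^sub>R b) \<bullet> (Q *v (a + t *\<^sub>R b))" by (rule nonneg)
    also have "\<dots> = \<alpha> + 2 * t * \<beta> + t\<^sup>2 * \<gamma>"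
      using symmetric_quadratic_form_swap[OF sym, of b a]
      by (simp add: \<alpha>_def \<beta>_def \<gamma>_def matrix_vector_right_distrib matrix_vector_mult_scaleR
          inner_add_left inner_add_right power2_eq_square algebra_simps)
    finally show ?thesis .
  qed
  show ?thesis
  proof (cases "\<gamma> = 0")
    case True
    have "\<beta> = 0"
    proof (rule ccontr)
      assume "\<beta> \<noteq> 0"
      then show False
        using line[of "- (\<alpha> + 1) / (2 * \<beta>)"] True by (simp add: field_simps)
    qed
    then show ?thesis using True unfolding \<alpha>_def \<beta>_def \<gamma>_def by simp
  next
    case False
    then have "0 < \<gamma>" using nonneg[of b] by (simp add: \<gamma>_def)
    then have "\<beta>\<^sup>2 \<le> \<alpha> * \<gamma>"
      using line[of "- \<beta> / \<gamma>"] by (simp add: field_simps power2_eq_square)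
    then show ?thesis by (simp add: \<alpha>_def \<beta>_def \<gamma>_def)
  qed
qed

lemma norm_mult_vec_le_of_quadratic_form_bounds:
  fixes Q :: "real^'n^'n"
  assumes sym: "transpose Q = Q" and nonneg: "\<And>v. 0 \<le> v \<bullet> (Q *v v)"
    and upper: "\<And>v. v \<bullet> (Q *v v) \<le> c * (v \<bullet> v)" and "0 \<le> c"
  shows "norm (Q *v v) \<le> c * norm v"
proof -
  define q where "q = Q *v v"
  have "(q \<bullet> q)\<^sup>2 \<le> (q \<bullet> (Q *v q)) * (v \<bullet> (Q *v v))"
    using quadratic_form_Cauchy_Schwarz[OF sym nonneg, of q v] by (simp add: q_def)
  also have "\<dots> \<le> (c * (q \<bullet> q)) * (c * (v \<bullet> v))"
    by (intro mult_mono upper nonneg) (use \<open>0 \<le> c\<close> in simp)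
  finally have bound: "(norm q)\<^sup>2 * (norm q)\<^sup>2 \<le> (norm q)\<^sup>2 * (c * norm v)\<^sup>2"
    by (simp add: dot_square_norm power2_eq_square algebra_simps)
  show ?thesis
  proof (cases "q = 0")
    case False
    then have "(norm q)\<^sup>2 \<le> (c * norm v)\<^sup>2"
      using mult_left_le_imp_le[OF bound] by simp
    then show ?thesis
      unfolding q_def by (rule power2_le_imp_le) (simp add: \<open>0 \<le> c\<close>)
  qed (use \<open>0 \<le> c\<close> in \<open>simp add: q_def [symmetric]\<close>)
qed

section \<open>Violations of the LMI are far from the samples\<close>

lemma convex_Xi_lower_bound_set:
  fixes Q :: "real^'n^'n"
  shows "convex {(A, B). \<forall>J w. \<epsilon> * (w \<bullet> w) \<le> w \<bullet> (Xi \<tau> A B J Q Y Z *v w)}"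
proof (rule convexI, clarsimp)
  fix A B A' B' J and w :: "real^('n + 'n + 'n)" and s t :: real
  assume AB: "\<forall>J w. \<epsilon> * (w \<bullet> w) \<le> w \<bullet> (Xi \<tau> A B J Q Y Z *v w)"
    and AB': "\<forall>J w. \<epsilon> * (w \<bullet> w) \<le> w \<bullet> (Xi \<tau> A' B' J Q Y Z *v w)"
    and "0 \<le> s" "0 \<le> t" "s + t = 1"
  have "\<epsilon> * (w \<bullet> w) = s * (\<epsilon> * (w \<bullet> w)) + t * (\<epsilon> * (w \<bullet> w))"
    by (simp add: \<open>s + t = 1\<close> flip: distrib_right)
  then have "\<epsilon> * (w \<bullet> w) \<le> s * (w \<bullet> (Xi \<tau> A B J Q Y Z *v w)) + t * (w \<bullet> (Xi \<tau> A' B' J Q Y Z *v w))"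
    using mult_left_mono[OF AB[rule_format, of w J] \<open>0 \<le> s\<close>]
      mult_left_mono[OF AB'[rule_format, of w J] \<open>0 \<le> t\<close>] by linarith
  then show "\<epsilon> * (w \<bullet> w) \<le> w \<bullet> (Xi \<tau> (s *\<^sub>R A + t *\<^sub>R A') (s *\<^sub>R B + t *\<^sub>R B') J Q Y Z *v w)"
    by (simp add: Xi_quadratic_form_affine \<open>s + t = 1\<close>)
qed

lemma Xi_lower_bound_of_vertices:
  fixes Q :: "real^'n^'n" and S :: "((real^'n^'n) \<times> (real^'p^'n)) set"
  assumes "finite S" and vertices: "\<forall>(A, B) \<in> verts S. \<forall>J. psd (Xi \<tau> A B J Q Y Z - \<epsilon> *\<^sub>R mat 1)"
    and "(A, B) \<in> S"
  shows "\<epsilon> * (w \<bullet> w) \<le> w \<bullet> (Xi \<tau> A B J Q Y Z *v w)"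
proof -
  let ?T = "{(A, B). \<forall>J w. \<epsilon> * (w \<bullet> w) \<le> w \<bullet> (Xi \<tau> A B J Q Y Z *v w)}"
  have "verts S \<subseteq> ?T"
    using vertices psd_diff_scaled_identity_lower by fastforce
  then have "convex hull (verts S) \<subseteq> ?T"
    by (intro hull_minimal convex_Xi_lower_bound_set)
  moreover have "S \<subseteq> convex hull (verts S)"
    unfolding verts_def Krein_Milman_polytope[OF \<open>finite S\<close>, symmetric] by (rule hull_subset)
  ultimately show ?thesis using \<open>(A, B) \<in> S\<close> by blast
qed

lemma Xi_quadratic_form_lipschitz:
  fixes Q :: "real^'n^'n" and Y Z :: "real^'n^'p"
  assumes Q: "\<And>v. norm (Q *v v) \<le> c * norm v" and Y: "\<And>v. norm (Y *v v) \<le> c * norm v"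
    and Z: "\<And>v. norm (Z *v v) \<le> c * norm v" and "0 \<le> c"
  shows "\<bar>w \<bullet> (Xi \<tau> A B J Q Y Z *v w) - w \<bullet> (Xi \<tau> A' B' J Q Y Z *v w)\<bar>
    \<le> 3 * c * dist (A, B) (A', B') * (w \<bullet> w)"
proof -
  obtain y u z where w: "w = stack3 y u z" by (rule stack3_cases)
  define d where "d = dist (A, B) (A', B')"
  have "0 \<le> d" by (simp add: d_def)
  have mult_vec_le: "norm (M *v v) \<le> d * e" if "norm M \<le> d" "norm v \<le> e" for M :: "real^'k^'n" and v e
    using order_trans[OF norm_matrix_vector_mult_le mult_mono[OF that]] \<open>0 \<le> d\<close> by simp
  have "norm (A - A') \<le> d" "norm (B - B') \<le> d"
    using dist_fst_le[of "(A, B)" "(A', B')"] dist_snd_le[of "(A, B)" "(A', B')"]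
    by (simp_all add: d_def dist_norm)
  define D where "D = Xi_offdiag A B J Q Y Z *v y - Xi_offdiag A' B' J Q Y Z *v y"
  have "D = (A - A') *v (Q *v y) + (B - B') *v select_coords J (Y *v y) (Z *v y)"
    by (simp add: D_def Xi_offdiag_mult_vec matrix_vector_mult_diff_rdistrib)
  also have "norm \<dots> \<le> d * (c * norm y) + d * (c * norm y + c * norm y)"
    using \<open>norm (A - A') \<le> d\<close> \<open>norm (B - B') \<le> d\<close> Q[of y]
      order_trans[OF norm_select_coords_le add_mono[OF Y Z]]
    by (intro norm_triangle_le add_mono mult_vec_le)
  finally have "norm D \<le> 3 * c * d * norm y" by simp
  have "\<bar>w \<bullet> (Xi \<tau> A B J Q Y Z *v w) - w \<bullet> (Xi \<tau> A' B' J Q Y Z *v w)\<bar>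
      = \<bar>2 * (z \<bullet> (Xi_offdiag A B J Q Y Z *v y)) - 2 * (z \<bullet> (Xi_offdiag A' B' J Q Y Z *v y))\<bar>"
    by (simp add: w Xi_quadratic_form)
  also have "\<dots> = 2 * \<bar>z \<bullet> D\<bar>"
    unfolding D_def inner_diff_right right_diff_distrib [symmetric] abs_mult by simp
  also have "\<bar>z \<bullet> D\<bar> \<le> norm z * norm D" by (rule Cauchy_Schwarz_ineq2)
  also have "\<dots> \<le> norm z * (3 * c * d * norm y)"
    using \<open>norm D \<le> 3 * c * d * norm y\<close> by (rule mult_left_mono) simp
  also have "2 * (norm z * (3 * c * d * norm y)) = 3 * c * d * (2 * norm y * norm z)" by simp
  also have "\<dots> \<le> 3 * c * d * ((norm y)\<^sup>2 + (norm z)\<^sup>2)"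
    using \<open>0 \<le> c\<close> \<open>0 \<le> d\<close> by (intro mult_left_mono sum_squares_bound) simp
  also have "\<dots> \<le> 3 * c * d * (w \<bullet> w)"
    using \<open>0 \<le> c\<close> \<open>0 \<le> d\<close> by (intro mult_left_mono) (simp_all add: w inner_stack3 power2_norm_eq_inner)
  finally show ?thesis by (simp add: d_def)
qed

lemma lam_min_Xi_nonpos_imp_far:
  fixes Q :: "real^'n^'n" and Y Z :: "real^'n^'p"
  assumes lower: "\<And>w. \<epsilon> * (w \<bullet> w) \<le> w \<bullet> (Xi \<tau> A' B' J Q Y Z *v w)"
    and "\<And>v. norm (Q *v v) \<le> c * norm v" "\<And>v. norm (Y *v v) \<le> c * norm v"
    and "\<And>v. norm (Z *v v) \<le> c * norm v" and "0 \<le> c"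
    and "lam_min (Xi \<tau> A B J Q Y Z) \<le> 0"
  shows "\<epsilon> \<le> 3 * c * dist (A, B) (A', B')"
proof -
  have "\<epsilon> - 3 * c * dist (A, B) (A', B') \<le> lam_min (Xi \<tau> A B J Q Y Z)"
  proof (rule lam_min_greatest)
    fix w :: "real^('n + 'n + 'n)" assume "norm w = 1"
    then have "w \<bullet> w = 1" by (simp add: dot_square_norm)
    then show "\<epsilon> - 3 * c * dist (A, B) (A', B') \<le> w \<bullet> (Xi \<tau> A B J Q Y Z *v w)"
      using lower[of w] Xi_quadratic_form_lipschitz[OF assms(2-5), of w \<tau> A B J A' B']
      unfolding \<open>w \<bullet> w = 1\<close> by linarith
  qed
  then show ?thesis using assms(6) by linarith
qed

lemma sdp_feasible_violation_far_from_samples: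
  fixes S :: "((real^'n^'n) \<times> (real^'p^'n)) set" and Q :: "real^'n^'n" and Y Z :: "real^'n^'p"
  assumes "finite S" and feasible: "sdp_feasible \<tau> \<epsilon> \<eta> L ubar YY ZZ (verts S) Q Y Z"
    and "0 \<le> \<epsilon>" "\<epsilon> \<le> \<eta>" and R: "\<forall>M \<in> YY \<union> ZZ. norm M \<le> R"
    and "(A', B') \<in> S" and "lam_min (Xi \<tau> A B J Q Y Z) \<le> 0"
  shows "\<epsilon> \<le> 3 * max \<eta> R * dist (A, B) (A', B')"
proof -
  from feasible have vertices: "\<forall>(A, B) \<in> verts S. \<forall>J. psd (Xi \<tau> A B J Q Y Z - \<epsilon> *\<^sub>R mat 1)"
    and upper: "psd (\<eta> *\<^sub>R mat 1 - Q)" and "Y \<in> YY" "Z \<in> ZZ"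
    by (simp_all add: sdp_feasible_def)
  have lower: "\<epsilon> * (w \<bullet> w) \<le> w \<bullet> (Xi \<tau> A' B' J Q Y Z *v w)" for w
    by (rule Xi_lower_bound_of_vertices[OF \<open>finite S\<close> vertices \<open>(A', B') \<in> S\<close>])
  have "0 \<le> v \<bullet> (Q *v v)" for v
    using lower[of "stack3 0 0 v"] \<open>0 \<le> \<epsilon>\<close> by (simp add: Xi_quadratic_form inner_stack3)
      (meson order_trans zero_le_mult_iff inner_ge_zero)
  then have "norm (Q *v v) \<le> \<eta> * norm v" for v
    using psd_scaled_identity_diff_upper[OF upper] \<open>0 \<le> \<epsilon>\<close> \<open>\<epsilon> \<le> \<eta>\<close>
    by (intro norm_mult_vec_le_of_quadratic_form_bounds) auto
  then have Q_bound: "norm (Q *v v) \<le> max \<eta> R * norm v" for v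
    by (rule order_trans) (simp add: mult_right_mono)
  have bound: "norm (M *v v) \<le> max \<eta> R * norm v" if "M \<in> YY \<union> ZZ" for M :: "real^'n^'p" and v
  proof -
    have "norm (M *v v) \<le> norm M * norm v" by (rule norm_matrix_vector_mult_le)
    also have "\<dots> \<le> max \<eta> R * norm v"
      using R that by (intro mult_right_mono) (auto intro: max.coboundedI2)
    finally show ?thesis .
  qed
  show ?thesis
    using lam_min_Xi_nonpos_imp_far[OF lower Q_bound bound bound] \<open>Y \<in> YY\<close> \<open>Z \<in> ZZ\<close>
      \<open>0 \<le> \<epsilon>\<close> \<open>\<epsilon> \<le> \<eta>\<close> \<open>lam_min (Xi \<tau> A B J Q Y Z) \<le> 0\<close>
    by simp
qed

section \<open>The saturated control Lyapunov function\<close>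

lemma convex_on_quadratic_form_affine:
  fixes P :: "real^'n^'n" and B :: "real^'p^'n"
  assumes nonneg: "\<And>v. 0 \<le> v \<bullet> (P *v v)"
  shows "convex_on UNIV (\<lambda>u. (a + B *v u) \<bullet> (P *v (a + B *v u)))"
proof (rule convex_onI)
  fix t :: real and u v :: "real^'p"
  define x y where "x = a + B *v u" and "y = a + B *v v"
  have combination: "a + B *v ((1 - t) *\<^sub>R u + t *\<^sub>R v) = (1 - t) *\<^sub>R x + t *\<^sub>R y"
    by (simp add: x_def y_def matrix_vector_right_distrib matrix_vector_mult_scaleR algebra_simps)
  have "0 \<le> t * (1 - t) * ((x - y) \<bullet> (P *v (x - y)))" if "0 < t" "t < 1"
    using that nonneg[of "x - y"] by simp
  then show "(a + B *v ((1 - t) *\<^sub>R u + t *\<^sub>R v)) \<bullet> (P *v (a + B *v ((1 - t) *\<^sub>R u + t *\<^sub>R v)))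
      \<le> (1 - t) * ((a + B *v u) \<bullet> (P *v (a + B *v u))) + t * ((a + B *v v) \<bullet> (P *v (a + B *v v)))"
    if "0 < t" "t < 1"
    using that unfolding combination x_def[symmetric] y_def[symmetric]
    by (simp add: matrix_vector_right_distrib matrix_vector_mult_diff_distrib matrix_vector_mult_scaleR
        inner_add_left inner_add_right inner_diff_left inner_diff_right algebra_simps)
qed simp

lemma convex_on_less_on_coordinate_segments:
  fixes g :: "real^'p \<Rightarrow> real"
  assumes convex: "convex_on UNIV g"
    and vertices: "\<And>J. g (select_coords J a b) < c"
    and segments: "\<And>i. u$i \<in> closed_segment (a$i) (b$i)"
  shows "g u < c"
proof -
  have "\<forall>u. (\<forall>i. i \<notin> F \<longrightarrow> u$i = a$i \<or> u$i = b$i) \<longrightarrow>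
      (\<forall>i. u$i \<in> closed_segment (a$i) (b$i)) \<longrightarrow> g u < c" if "finite F" for F
    using that
  proof (induction F rule: finite_induct)
    case empty
    show ?case
    proof (intro allI impI)
      fix u :: "real^'p"
      assume "\<forall>i. i \<notin> {} \<longrightarrow> u$i = a$i \<or> u$i = b$i"
      then have "u = select_coords {i. u$i = a$i} a b"
        by (auto simp: select_coords_def vec_eq_iff)
      then show "g u < c" using vertices by metis
    qed
  next
    case (insert j F)
    show ?case
    proof (intro allI impI)
      fix u :: "real^'p"
      assume ends: "\<forall>i. i \<notin> insert j F \<longrightarrow> u$i = a$i \<or> u$i = b$i"
        and segs: "\<forall>i. u$i \<in> closed_segment (a$i) (b$i)"
      obtain t where t: "0 \<le> t" "t \<le> 1" "u$j = (1 - t) * a$j + t * b$j"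
        using segs in_segment(1) by (metis real_scaleR_def)
      define ua ub where "ua = (\<chi> i. if i = j then a$i else u$i)" and "ub = (\<chi> i. if i = j then b$i else u$i)"
      have "g ua < c" "g ub < c"
        using insert.IH ends segs by (auto simp: ua_def ub_def)
      have "u = (1 - t) *\<^sub>R ua + t *\<^sub>R ub"
        using t(3) by (auto simp: vec_eq_iff ua_def ub_def algebra_simps)
      then have "g u \<le> (1 - t) * g ua + t * g ub"
        using convex_onD[OF convex t(1,2)] by simp
      also have "\<dots> < c"
        using \<open>g ua < c\<close> \<open>g ub < c\<close> t(1,2)
          mult_left_mono[of "g ua" "max (g ua) (g ub)" "1 - t"] mult_left_mono[of "g ub" "max (g ua) (g ub)" t]
        by (simp add: algebra_simps)
      finally show "g u < c" .
    qed
  qed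
  from this[OF finite_class.finite_UNIV] show ?thesis using segments by blast
qed

lemma saturation_in_closed_segment:
  fixes k h c :: real
  assumes "\<bar>h\<bar> \<le> c"
  shows "sgn k * min c \<bar>k\<bar> \<in> closed_segment k h"
  using assms by (cases "\<bar>k\<bar> \<le> c") (auto simp: closed_segment_eq_real_ivl min_def sgn_if abs_if split: if_split_asm)

lemma saturated_input_decrease:
  fixes P :: "real^'n^'n" and B :: "real^'p^'n"
  assumes "\<And>v. 0 \<le> v \<bullet> (P *v v)"
    and vertices: "\<And>J. (a + B *v select_coords J k h) \<bullet> (P *v (a + B *v select_coords J k h)) < c"
    and "\<And>i. \<bar>h$i\<bar> \<le> ubar$i"
  shows "(a + B *v satU ubar k) \<bullet> (P *v (a + B *v satU ubar k)) < c"
  using convex_on_less_on_coordinate_segments[OF convex_on_quadratic_form_affine[OF assms(1)] vertices]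
    saturation_in_closed_segment assms(3) by (simp add: satU_def)

definition stack2 :: "real \<Rightarrow> real^'n \<Rightarrow> real^(unit + 'n)" where
  "stack2 s v = (\<chi> i. case i of Inl _ \<Rightarrow> s | Inr b \<Rightarrow> v$b)"

lemma blk2_quadratic_form:
  "stack2 s v \<bullet> (blk2 a r c Q *v stack2 s v) = a * s * s + s * (r \<bullet> v) + s * (c \<bullet> v) + v \<bullet> (Q *v v)"
  unfolding inner_vec_def matrix_vector_mult_def sum_UNIV_sum_type
  by (simp add: stack2_def blk2_def sum_distrib_left algebra_simps sum.distrib)

lemma psd_blk2_bound:
  fixes Q :: "real^'n^'n"
  assumes "psd (blk2 (c\<^sup>2) r r Q)" and "0 < c" and "y \<bullet> (Q *v y) \<le> 1"
  shows "\<bar>r \<bullet> y\<bar> \<le> c"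
proof -
  have "0 \<le> c\<^sup>2 - 2 * s * (r \<bullet> y) + s\<^sup>2 * (y \<bullet> (Q *v y))" for s
  proof -
    have "0 \<le> stack2 1 (- s *\<^sub>R y) \<bullet> (blk2 (c\<^sup>2) r r Q *v stack2 1 (- s *\<^sub>R y))"
      using assms(1) by (simp add: psd_def)
    then show ?thesis
      by (simp add: blk2_quadratic_form linear_neg matrix_vector_mult_scaleR power2_eq_square algebra_simps)
  qed
  from this[of c] this[of "- c"] have "2 * c * (r \<bullet> y) \<le> 2 * c * c" "- (2 * c * (r \<bullet> y)) \<le> 2 * c * c"
    using mult_left_mono[OF assms(3), of "c\<^sup>2"] by (simp_all add: power2_eq_square)
  then show ?thesis
    using \<open>0 < c\<close> mult_le_cancel_left_pos[OF \<open>0 < c\<close>, of "- (r \<bullet> y)" c] by (simp add: abs_le_iff)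
qed

lemma matrix_inv_right_of_pos_def:
  fixes Q :: "real^'n^'n"
  assumes "\<And>v. v \<noteq> 0 \<Longrightarrow> 0 < v \<bullet> (Q *v v)"
  shows "Q ** matrix_inv Q = mat 1"
proof -
  have "inj ((*v) Q)"
  proof (rule injI)
    fix a b assume "Q *v a = Q *v b"
    then have "(a - b) \<bullet> (Q *v (a - b)) = 0" by (simp add: matrix_vector_mult_diff_distrib)
    then show "a = b" using assms[of "a - b"] by force
  qed
  then have "invertible Q" by (simp add: invertible_left_inverse matrix_left_invertible_injective)
  then have "\<exists>Q'. Q ** Q' = mat 1 \<and> Q' ** Q = mat 1" by (simp add: invertible_def)
  then show ?thesis unfolding matrix_inv_def by (rule someI2_ex) blast
qed

lemma Xi_pos_imp_vertex_decrease:
  fixes Q P :: "real^'n^'n" and Y Z :: "real^'n^'p"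
  assumes pos: "\<And>w. w \<noteq> 0 \<Longrightarrow> 0 < w \<bullet> (Xi \<tau> A B J Q Y Z *v w)" and "\<tau> \<le> 1"
    and inverse: "\<And>x. Q *v (P *v x) = x" and "x \<noteq> 0"
  shows "(A *v x + B *v select_coords J (Y *v (P *v x)) (Z *v (P *v x)))
      \<bullet> (P *v (A *v x + B *v select_coords J (Y *v (P *v x)) (Z *v (P *v x)))) < x \<bullet> (P *v x)"
proof -
  define y where "y = P *v x"
  define v where "v = Xi_offdiag A B J Q Y Z *v y"
  have v_eq: "v = A *v x + B *v select_coords J (Y *v y) (Z *v y)"
    by (simp add: v_def Xi_offdiag_mult_vec y_def inverse)
  have form: "q \<bullet> (P *v q) = (P *v q) \<bullet> (Q *v (P *v q))" for q
    by (simp add: inverse inner_commute)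
  have "y \<noteq> 0" using \<open>x \<noteq> 0\<close> inverse[of x] by (auto simp: y_def)
  then have "0 < y \<bullet> (Q *v y)"
    using pos[of "stack3 0 0 y"] by (simp add: Xi_quadratic_form)
  then have "0 \<le> x \<bullet> (P *v x)" using form[of x] by (simp add: y_def)
  \<comment> \<open>Schur complement: \<open>\<Xi>\<close> is positive on \<open>(y, 0, -P v)\<close>, which bounds \<open>v' P v\<close>
    by \<open>\<tau> x' P x\<close>.\<close>
  have "0 < stack3 y 0 (- (P *v v)) \<bullet> (Xi \<tau> A B J Q Y Z *v stack3 y 0 (- (P *v v)))"
    using pos \<open>y \<noteq> 0\<close> by simp
  also have "\<dots> = \<tau> * (x \<bullet> (P *v x)) - v \<bullet> (P *v v)"
    using form[of x] form[of v]
    by (simp add: Xi_quadratic_form linear_neg v_def[symmetric] y_def[symmetric] inner_commute)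
  also have "\<dots> \<le> x \<bullet> (P *v x) - v \<bullet> (P *v v)"
    using mult_right_mono[OF \<open>\<tau> \<le> 1\<close> \<open>0 \<le> x \<bullet> (P *v x)\<close>] by simp
  finally show ?thesis
    by (simp add: v_eq y_def)
qed

lemma is_clf_sat_of_Xi_pos:
  fixes Q :: "real^'n^'n" and Y Z :: "real^'n^'p"
  assumes pos: "\<And>A B J w. (A, B) \<in> \<Omega> \<Longrightarrow> w \<noteq> 0 \<Longrightarrow> 0 < w \<bullet> (Xi \<tau> A B J Q Y Z *v w)"
    and "(A0, B0) \<in> \<Omega>" and "\<tau> \<le> 1"
    and feasible: "sdp_feasible \<tau> \<epsilon> \<eta> L ubar YY ZZ V Q Y Z"
    and ubar: "\<forall>i. 0 < ubar$i"
  shows "is_clf_sat \<Omega> L ubar (matrix_inv Q) (Y ** matrix_inv Q)"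
proof -
  have state: "psd (blk2 1 ((L$i) v* Q) (Q *v (L$i)) Q)"
    and input: "psd (blk2 ((ubar$k)\<^sup>2) (Z$k) (Z$k) Q)"
    and upper: "psd (\<eta> *\<^sub>R mat 1 - Q)" for i k
    using feasible by (simp_all add: sdp_feasible_def)
  have sym: "transpose Q = Q" by (rule psd_scaled_identity_diff_upper(1)[OF upper])
  have Q_pos: "0 < v \<bullet> (Q *v v)" if "v \<noteq> 0" for v
    using pos[OF \<open>(A0, B0) \<in> \<Omega>\<close>, of "stack3 0 0 v" "{}"] that by (simp add: Xi_quadratic_form)
  define P where "P = matrix_inv Q"
  have inverse: "Q *v (P *v x) = x" for x
    using matrix_inv_right_of_pos_def[OF Q_pos] by (simp add: P_def matrix_vector_mul_assoc)
  have V_eq: "x \<bullet> (P *v x) = (P *v x) \<bullet> (Q *v (P *v x))" for x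
    by (simp add: inverse inner_commute)
  have P_nonneg: "0 \<le> x \<bullet> (P *v x)" for x
    using Q_pos[of "P *v x"] V_eq[of x] by (cases "P *v x = 0") auto
  have level_bound: "\<bar>r \<bullet> (P *v x)\<bar> \<le> c" if "psd (blk2 (c\<^sup>2) r r Q)" "0 < c" "x \<bullet> (P *v x) \<le> 1" for r c x
    using psd_blk2_bound[OF that(1,2)] that(3) V_eq by simp
  show ?thesis
    unfolding is_clf_sat_def P_def[symmetric] Let_def
  proof (intro conjI allI impI)
    fix x :: "real^'n" assume "x \<noteq> 0"
    then have "P *v x \<noteq> 0" using inverse[of x] by auto
    then show "0 < x \<bullet> (P *v x)" using Q_pos V_eq by simp
  next
    fix x :: "real^'n" and i assume "x \<bullet> (P *v x) \<le> 1"
    have "blk2 1 ((L$i) v* Q) (Q *v (L$i)) Q = blk2 (1\<^sup>2) (Q *v (L$i)) (Q *v (L$i)) Q"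
      by (metis sym transpose_matrix_vector power_one)
    then have "\<bar>(Q *v (L$i)) \<bullet> (P *v x)\<bar> \<le> 1"
      using level_bound state \<open>x \<bullet> (P *v x) \<le> 1\<close> by (metis zero_less_one)
    moreover have "(Q *v (L$i)) \<bullet> (P *v x) = L$i \<bullet> x"
      using symmetric_quadratic_form_swap[OF sym, of "P *v x" "L$i"] by (simp add: inner_commute inverse)
    ultimately show "L$i \<bullet> x \<le> 1" by simp
  next
    fix x :: "real^'n" and A B
    assume "(A, B) \<in> \<Omega>" "x \<bullet> (P *v x) \<le> 1" "x \<noteq> 0"
    have "\<bar>(Z *v (P *v x))$i\<bar> \<le> ubar$i" for i
      using level_bound[OF input] ubar \<open>x \<bullet> (P *v x) \<le> 1\<close> by (simp add: matrix_vector_mul_component)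
    then show "(A *v x + B *v satU ubar ((Y ** P) *v x)) \<bullet> (P *v (A *v x + B *v satU ubar ((Y ** P) *v x)))
        < x \<bullet> (P *v x)"
      using saturated_input_decrease[OF P_nonneg
          Xi_pos_imp_vertex_decrease[OF pos[OF \<open>(A, B) \<in> \<Omega>\<close>] \<open>\<tau> \<le> 1\<close> inverse \<open>x \<noteq> 0\<close>]]
      by (simp add: matrix_vector_mul_assoc)
  qed
qed

section \<open>Termination of the learner-verifier loop\<close>

lemma compact_no_separated_sequence:
  fixes f :: "nat \<Rightarrow> 'a::metric_space"
  assumes "compact K" and "\<And>k. f k \<in> K" and "0 < \<delta>"
    and separated: "\<And>j k. j < k \<Longrightarrow> \<delta> \<le> dist (f k) (f j)"
  shows False
proof -
  obtain l r where "strict_mono r" and "(f \<circ> r) \<longlonglongrightarrow> l"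
    using compact_imp_seq_compact[OF \<open>compact K\<close>] assms(2) by (metis seq_compactE)
  then obtain M where "\<forall>m\<ge>M. \<forall>n\<ge>M. dist ((f \<circ> r) m) ((f \<circ> r) n) < \<delta>"
    using LIMSEQ_imp_Cauchy metric_CauchyD \<open>0 < \<delta>\<close> by blast
  then have "dist (f (r (Suc M))) (f (r M)) < \<delta>" by auto
  moreover have "r M < r (Suc M)" using \<open>strict_mono r\<close> by (simp add: strict_mono_def)
  ultimately show False using separated by fastforce
qed

locale learner_verifier_loop =
  fixes \<tau> \<epsilon> \<eta> :: real
    and L :: "real^'n^'l" and ubar :: "real^'p"
    and \<Omega> :: "((real^'n^'n) \<times> (real^'p^'n)) set"
    and YY ZZ :: "(real^'n^'p) set"
    and p1 :: "(real^'n^'n) \<times> (real^'p^'n)"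
    and lrn :: "((real^'n^'n) \<times> (real^'p^'n)) set \<Rightarrow> ((real^'n^'n) \<times> (real^'n^'p) \<times> (real^'n^'p)) option"
    and ver :: "(real^'n^'n) \<times> (real^'n^'p) \<times> (real^'n^'p) \<Rightarrow> ((real^'n^'n) \<times> (real^'p^'n)) \<times> 'p set"
  assumes eps_pos: "0 < \<epsilon>" and eps_le_eta: "\<epsilon> \<le> \<eta>" and tau_le_1: "\<tau> \<le> 1"
    and ubar_pos: "\<forall>i. 0 < ubar$i"
    and compact_Omega: "compact \<Omega>" and p1_in_Omega: "p1 \<in> \<Omega>"
    and compact_YY: "compact YY" and compact_ZZ: "compact ZZ"
    and learner: "\<forall>S. finite S \<and> S \<subseteq> \<Omega> \<longrightarrow>
        (case lrn S of
           None \<Rightarrow> \<not> (\<exists>Q Y Z. sdp_feasible \<tau> \<epsilon> \<eta> L ubar YY ZZ (verts S) Q Y Z)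
         | Some (Q, Y, Z) \<Rightarrow> sdp_optimal \<tau> \<epsilon> \<eta> L ubar YY ZZ (verts S) Q Y Z)"
    and verifier: "\<forall>Q Y Z. is_global_min \<Omega> \<tau> Q Y Z (ver (Q, Y, Z))"
begin

abbreviation S :: "nat \<Rightarrow> ((real^'n^'n) \<times> (real^'p^'n)) set" where
  "S \<equiv> samples lrn ver p1"

lemma verifier_point_in_Omega: "fst (ver s) \<in> \<Omega>"
proof -
  obtain Q Y Z where "s = (Q, Y, Z)" by (cases s)
  moreover obtain A B J where "ver (Q, Y, Z) = ((A, B), J)" by (metis prod.exhaust)
  ultimately show ?thesis
    using verifier[rule_format, of Q Y Z] by (simp add: is_global_min_def)
qed

lemma samples_finite_subset: "finite (S k) \<and> S k \<subseteq> \<Omega>"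
  by (induction k) (auto simp: p1_in_Omega verifier_point_in_Omega split: option.split)

lemma samples_mono: "j \<le> k \<Longrightarrow> S j \<subseteq> S k"
  by (rule lift_Suc_mono_le[of S]) (auto split: option.split)

lemma learner_feasible:
  "lrn (S k) = Some (Q, Y, Z) \<Longrightarrow> sdp_feasible \<tau> \<epsilon> \<eta> L ubar YY ZZ (verts (S k)) Q Y Z"
  using learner samples_finite_subset[of k] by (force simp: sdp_optimal_def)

lemma terminates: "\<exists>k. lrn (S k) = None \<or> (\<exists>s. lrn (S k) = Some s \<and> 0 < lstar \<tau> ver s)"
proof (rule ccontr)
  assume "\<not> ?thesis"
  then have "\<forall>k. \<exists>s. lrn (S k) = Some s \<and> lstar \<tau> ver s \<le> 0"
    by (metis not_le option.exhaust)
  then obtain s where s: "\<And>k. lrn (S k) = Some (s k)" "\<And>k. lstar \<tau> ver (s k) \<le> 0" by metis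
  define pt where "pt k = fst (ver (s k))" for k
  obtain R where R: "\<forall>M \<in> YY \<union> ZZ. norm M \<le> R"
    using compact_imp_bounded[OF compact_Un[OF compact_YY compact_ZZ]] by (auto simp: bounded_iff)
  define c where "c = max \<eta> R"
  have "0 < c" using eps_pos eps_le_eta by (simp add: c_def less_max_iff_disj)
  have "\<epsilon> / (3 * c) \<le> dist (pt k) (pt j)" if "j < k" for j k
  proof -
    obtain Q Y Z where sk: "s k = (Q, Y, Z)" by (cases "s k")
    obtain A B J where ver: "ver (Q, Y, Z) = ((A, B), J)" by (metis prod.exhaust)
    obtain A' B' where pj: "pt j = (A', B')" by (cases "pt j")
    have "finite (S k)" using samples_finite_subset by blast
    moreover have "lrn (S k) = Some (Q, Y, Z)" using s(1)[of k] by (simp add: sk)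
    moreover have "(A', B') \<in> S k"
      using s(1)[of j] samples_mono[of "Suc j" k] that by (auto simp: pt_def pj[symmetric])
    moreover have "lam_min (Xi \<tau> A B J Q Y Z) \<le> 0"
      using s(2)[of k] by (simp add: sk ver lstar_def)
    ultimately have "\<epsilon> \<le> 3 * c * dist (A, B) (A', B')"
      unfolding c_def
      by (intro sdp_feasible_violation_far_from_samples[OF _ learner_feasible _ eps_le_eta R])
        (use eps_pos in auto)
    moreover have "pt k = (A, B)" by (simp add: pt_def sk ver)
    ultimately show ?thesis
      using \<open>0 < c\<close> by (simp add: pj pos_divide_le_eq mult.commute)
  qed
  moreover have "pt k \<in> \<Omega>" for k by (simp add: pt_def verifier_point_in_Omega)
  moreover have "0 < \<epsilon> / (3 * c)" using eps_pos \<open>0 < c\<close> by simp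
  ultimately show False by (intro compact_no_separated_sequence[OF compact_Omega])
qed

lemma clf_of_positive_lstar:
  assumes "lrn (S k) = Some (Q, Y, Z)" and "0 < lstar \<tau> ver (Q, Y, Z)"
  shows "is_clf_sat \<Omega> L ubar (matrix_inv Q) (Y ** matrix_inv Q)"
proof -
  obtain A0 B0 J0 where ver: "ver (Q, Y, Z) = ((A0, B0), J0)" by (metis prod.exhaust)
  have "0 < lam_min (Xi \<tau> A0 B0 J0 Q Y Z)"
    using assms(2) by (simp add: ver lstar_def)
  moreover have "lam_min (Xi \<tau> A0 B0 J0 Q Y Z) \<le> lam_min (Xi \<tau> A B J Q Y Z)" if "(A, B) \<in> \<Omega>" for A B J
    using verifier[rule_format, of Q Y Z] that by (force simp: ver is_global_min_def)
  ultimately have "0 < lam_min (Xi \<tau> A B J Q Y Z)" if "(A, B) \<in> \<Omega>" for A B J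
    using that by (meson less_le_trans)
  then have "0 < w \<bullet> (Xi \<tau> A B J Q Y Z *v w)" if "(A, B) \<in> \<Omega>" "w \<noteq> 0" for A B J w
    using lam_min_le_quadratic_form[of "Xi \<tau> A B J Q Y Z" w] that
    by (meson inner_gt_zero_iff mult_pos_pos order_less_le_trans)
  then show ?thesis
    using is_clf_sat_of_Xi_pos p1_in_Omega tau_le_1 learner_feasible[OF assms(1)] ubar_pos
    by (metis prod.exhaust_sel)
qed

end

theorem theorem2:
  fixes \<tau> \<epsilon> \<eta> :: real
    and L :: "real^'n^'l" and ubar :: "real^'p"
    and \<Omega> :: "((real^'n^'n) \<times> (real^'p^'n)) set"
    and YY ZZ :: "(real^'n^'p) set"
    and p1 :: "(real^'n^'n) \<times> (real^'p^'n)"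
    and lrn :: "((real^'n^'n) \<times> (real^'p^'n)) set \<Rightarrow> ((real^'n^'n) \<times> (real^'n^'p) \<times> (real^'n^'p)) option"
    and ver :: "(real^'n^'n) \<times> (real^'n^'p) \<times> (real^'n^'p) \<Rightarrow> ((real^'n^'n) \<times> (real^'p^'n)) \<times> 'p set"
  assumes "0 < \<epsilon>" and "\<epsilon> \<le> \<eta>" and "0 \<le> \<tau>" and "\<tau> \<le> 1"
    and "\<forall>i. 0 < ubar$i"
    and "compact \<Omega>" and "p1 \<in> \<Omega>"
    and "convex YY" and "compact YY" and "YY \<noteq> {}"
    and "convex ZZ" and "compact ZZ" and "ZZ \<noteq> {}"
    and learner: "\<forall>S. finite S \<and> S \<subseteq> \<Omega> \<longrightarrow>
        (case lrn S of
           None \<Rightarrow> \<not> (\<exists>Q Y Z. sdp_feasible \<tau> \<epsilon> \<eta> L ubar YY ZZ (verts S) Q Y Z)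
         | Some (Q, Y, Z) \<Rightarrow> sdp_optimal \<tau> \<epsilon> \<eta> L ubar YY ZZ (verts S) Q Y Z)"
    and verifier: "\<forall>Q Y Z. is_global_min \<Omega> \<tau> Q Y Z (ver (Q, Y, Z))"
  shows "\<exists>k. (\<forall>i<k. \<exists>s. lrn (samples lrn ver p1 i) = Some s \<and> lstar \<tau> ver s \<le> 0) \<and>
             (lrn (samples lrn ver p1 k) = None \<or>
              (\<exists>Q Y Z. lrn (samples lrn ver p1 k) = Some (Q, Y, Z) \<and> 0 < lstar \<tau> ver (Q, Y, Z) \<and>
                 is_clf_sat \<Omega> L ubar (matrix_inv Q) (Y ** matrix_inv Q)))"
proof -
  \<comment> \<open>\<open>0 \<le> \<tau>\<close> and the convexity and nonemptiness of \<open>YY\<close> and \<open>ZZ\<close> only concern the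
    learner's SDP; the argument does not use them.\<close>
  interpret learner_verifier_loop \<tau> \<epsilon> \<eta> L ubar \<Omega> YY ZZ p1 lrn ver
    using assms by unfold_locales auto
  define stop where "stop k \<longleftrightarrow> lrn (S k) = None \<or> (\<exists>s. lrn (S k) = Some s \<and> 0 < lstar \<tau> ver s)"
    for k
  obtain k where "stop k" and before: "\<forall>i<k. \<not> stop i"
    using terminates exists_least_iff[of stop] unfolding stop_def by blast
  show ?thesis
  proof (intro exI[of _ k] conjI allI impI)
    fix i assume "i < k"
    then show "\<exists>s. lrn (S i) = Some s \<and> lstar \<tau> ver s \<le> 0"
      using before by (cases "lrn (S i)") (auto simp: stop_def)
  next
    show "lrn (S k) = None \<or> (\<exists>Q Y Z. lrn (S k) = Some (Q, Y, Z) \<and> 0 < lstar \<tau> ver (Q, Y, Z) \<and>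
        is_clf_sat \<Omega> L ubar (matrix_inv Q) (Y ** matrix_inv Q))"
      using \<open>stop k\<close> clf_of_positive_lstar unfolding stop_def by fastforce
  qed
qed

end
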